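(* Let $\mathbb P$ be atomless, $\Lambda\in\mathcal H_I$, and $\overline{\mathbb Q}=\sup_{\mathbb Q\in\mathcal P(\mathbb P,Y_1,Y_2)}\mathbb Q$ (setwise supremum). (i) If $Y_1=0$ and $Y_2$ is nonnegative with $1<\mathbb E^{\mathbb P}(Y_2)<\infty$, then $\overline{\mathbb Q}(A)=1\wedge\mathbb E^{\mathbb P}(Y_2\mathds 1_A)$ for all $A\in\mathcal F$ and $\sup_{\mathbb Q\in\mathcal P(\mathbb P,0,Y_2)}\Lambda\mathrm{VaR}^{\mathbb Q}=\Lambda\mathrm{VaR}^{\overline{\mathbb Q}}$. (ii) If $Y_1=k_1$ and $Y_2=k_2$ are constants with $0\le k_1<1<k_2$, then $\overline{\mathbb Q}(A)=g(\mathbb P(A))$ for all $A\in\mathcal F$ with $g(x)=(k_2x)\wedge(k_1x+1-k_1)$, $x\in[0,1]$, and $\sup_{\mathbb Q\in\mathcal P(\mathbb P,k_1,k_2)}\Lambda\mathrm{VaR}^{\mathbb Q}=(g^{-1}\circ\Lambda)\mathrm{VaR}^{\mathbb P}$.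
   Context: $\mathcal P(\mathbb P,Y_1,Y_2)=\{\mathbb Q\ll\mathbb P: Y_1\le\mathrm d\mathbb Q/\mathrm d\mathbb P\le Y_2\}$. For a capacity $w$ (monotone $w:\mathcal F\to[0,1]$, $w(\emptyset)=0,w(\Omega)=1$) and $\Lambda:\mathbb R\to[0,1]$, $\Lambda\mathrm{VaR}^w(X)=\inf\{x\in\mathbb R:w(X>x)\le\Lambda(x)\}$ ($\inf\emptyset=\infty$). $\mathcal H_I$: increasing functions $\mathbb R\to(0,1)$. In (ii), $g$ is continuous and strictly increasing on the set where $g<1$, and $g^{-1}:(0,1)\to(0,1)$ denotes the inverse there, so $g^{-1}\circ\Lambda$ is well defined. *)

theory Defs
  imports "HOL-Probability.Probability"
begin

definition atomless :: "'a measure \<Rightarrow> bool" where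
  "atomless M \<longleftrightarrow> (\<forall>A\<in>sets M. measure M A > 0 \<longrightarrow>
      (\<exists>B\<in>sets M. B \<subseteq> A \<and> 0 < measure M B \<and> measure M B < measure M A))"

definition H_I :: "(real \<Rightarrow> real) set" where
  "H_I = {L. mono L \<and> (\<forall>x. 0 < L x \<and> L x < 1)}"

definition Pset :: "'a measure \<Rightarrow> ('a \<Rightarrow> real) \<Rightarrow> ('a \<Rightarrow> real) \<Rightarrow> 'a measure set" where
  "Pset M Y1 Y2 = {Q. prob_space Q \<and> sets Q = sets M \<and> absolutely_continuous M Q \<and>
      (AE x in M. ennreal (Y1 x) \<le> RN_deriv M Q x \<and> RN_deriv M Q x \<le> ennreal (Y2 x))}"

definition setsup :: "'a measure set \<Rightarrow> 'a set \<Rightarrow> real" where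
  "setsup \<Q> A = (SUP Q\<in>\<Q>. measure Q A)"

text \<open>Lambda-VaR with respect to a capacity w on the sample space \<Omega>;
  inf of the empty set is +\<infinity>.\<close>
definition LVaR :: "'a set \<Rightarrow> ('a set \<Rightarrow> real) \<Rightarrow> (real \<Rightarrow> real) \<Rightarrow> ('a \<Rightarrow> real) \<Rightarrow> ereal" where
  "LVaR \<Omega> w L X = Inf {ereal x | x. w {\<omega>\<in>\<Omega>. X \<omega> > x} \<le> L x}"

definition gfun :: "real \<Rightarrow> real \<Rightarrow> real \<Rightarrow> real" where
  "gfun k1 k2 x = min (k2 * x) (k1 * x + 1 - k1)"

definition ginv :: "real \<Rightarrow> real \<Rightarrow> real \<Rightarrow> real" where
  "ginv k1 k2 y = (THE x. 0 \<le> x \<and> x \<le> 1 \<and> gfun k1 k2 x < 1 \<and> gfun k1 k2 x = y)"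

end

theory Submission
  imports Defs
begin

text \<open>For every event \<open>A\<close> the supremum over \<open>\<P>(\<bbbP>,Y\<^sub>1,Y\<^sub>2)\<close> is attained by one measure, whose
  density is a constant multiple of \<open>Y\<^sub>2\<close> (resp. \<open>1\<close>) on \<open>A\<close> and another constant multiple off \<open>A\<close>:
  put as much mass on \<open>A\<close> as the upper bound allows and spread the rest over the complement.
  Since the supremum is attained on every level set \<open>{X > x}\<close> and every \<open>\<bbbQ>\<close>-probability of
  these sets decreases in \<open>x\<close>, the supremum of the \<open>\<Lambda>VaR\<close>s is the \<open>\<Lambda>VaR\<close> of the envelope.
  In (ii) the envelope is \<open>g \<circ> \<bbbP>\<close>, and \<open>g(p) \<le> \<Lambda>(x) \<longleftrightarrow> p \<le> g\<^sup>-\<^sup>1(\<Lambda>(x))\<close> because \<open>\<Lambda> < 1\<close> and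
  \<open>g\<close> is strictly increasing where it is below \<open>1\<close>.\<close>

lemma LVaR_le:
  assumes "w {\<omega>\<in>\<Omega>. X \<omega> > x} \<le> L x"
  shows "LVaR \<Omega> w L X \<le> ereal x"
  unfolding LVaR_def using assms by (intro Inf_lower) auto

lemma LVaR_ge:
  assumes L: "mono L"
    and antitone: "\<And>x y. x \<le> y \<Longrightarrow> w {\<omega>\<in>\<Omega>. X \<omega> > y} \<le> w {\<omega>\<in>\<Omega>. X \<omega> > x}"
    and exceeds: "\<not> w {\<omega>\<in>\<Omega>. X \<omega> > r} \<le> L r"
  shows "ereal r \<le> LVaR \<Omega> w L X"
  unfolding LVaR_def
proof (rule Inf_greatest)
  fix z assume "z \<in> {ereal x |x. w {\<omega>\<in>\<Omega>. X \<omega> > x} \<le> L x}"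
  then obtain x where z: "z = ereal x" and wx: "w {\<omega>\<in>\<Omega>. X \<omega> > x} \<le> L x" by blast
  have "r \<le> x"
  proof (rule ccontr)
    assume "\<not> r \<le> x"
    then have "w {\<omega>\<in>\<Omega>. X \<omega> > r} \<le> w {\<omega>\<in>\<Omega>. X \<omega> > x}" and "L x \<le> L r"
      using antitone monoD[OF L] by simp_all
    with wx exceeds show False by linarith
  qed
  then show "ereal r \<le> z" using z by simp
qed

lemma LVaR_mono_capacity:
  assumes "\<And>x. w {\<omega>\<in>\<Omega>. X \<omega> > x} \<le> W {\<omega>\<in>\<Omega>. X \<omega> > x}"
  shows "LVaR \<Omega> w L X \<le> LVaR \<Omega> W L X"
  unfolding LVaR_def by (rule Inf_superset_mono) (use assms in \<open>force intro: order_trans\<close>)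

lemma LVaR_cong:
  assumes "\<And>x. w {\<omega>\<in>\<Omega>. X \<omega> > x} \<le> L x \<longleftrightarrow> w' {\<omega>\<in>\<Omega>. X \<omega> > x} \<le> L' x"
  shows "LVaR \<Omega> w L X = LVaR \<Omega> w' L' X"
  unfolding LVaR_def using assms by simp

lemma SUP_LVaR_eq_LVaR_envelope:
  assumes "Qs \<noteq> {}" and L: "mono L"
    and below: "\<And>Q x. Q \<in> Qs \<Longrightarrow> w Q {\<omega>\<in>\<Omega>. X \<omega> > x} \<le> W {\<omega>\<in>\<Omega>. X \<omega> > x}"
    and attained: "\<And>x. \<exists>Q\<in>Qs. w Q {\<omega>\<in>\<Omega>. X \<omega> > x} = W {\<omega>\<in>\<Omega>. X \<omega> > x}"
    and antitone: "\<And>Q x y. Q \<in> Qs \<Longrightarrow> x \<le> y \<Longrightarrow>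
      w Q {\<omega>\<in>\<Omega>. X \<omega> > y} \<le> w Q {\<omega>\<in>\<Omega>. X \<omega> > x}"
  shows "(SUP Q\<in>Qs. LVaR \<Omega> (w Q) L X) = LVaR \<Omega> W L X"
proof (rule antisym)
  show "(SUP Q\<in>Qs. LVaR \<Omega> (w Q) L X) \<le> LVaR \<Omega> W L X"
    using below by (intro SUP_least LVaR_mono_capacity)
  show "LVaR \<Omega> W L X \<le> (SUP Q\<in>Qs. LVaR \<Omega> (w Q) L X)"
  proof (rule dense_le)
    fix y assume y: "y < LVaR \<Omega> W L X"
    show "y \<le> (SUP Q\<in>Qs. LVaR \<Omega> (w Q) L X)"
    proof (cases y)
      case (real r)
      have exceeds: "\<not> W {\<omega>\<in>\<Omega>. X \<omega> > r} \<le> L r"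
        using LVaR_le[where w=W and x=r and \<Omega>=\<Omega> and X=X and L=L] y real by force
      obtain Q where Q: "Q \<in> Qs" and wQ: "w Q {\<omega>\<in>\<Omega>. X \<omega> > r} = W {\<omega>\<in>\<Omega>. X \<omega> > r}"
        using attained by blast
      have "ereal r \<le> LVaR \<Omega> (w Q) L X"
        using L antitone[OF Q] exceeds wQ by (intro LVaR_ge) auto
      also have "\<dots> \<le> (SUP Q\<in>Qs. LVaR \<Omega> (w Q) L X)"
        using Q by (rule SUP_upper)
      finally show ?thesis using real by simp
    qed (use y in auto)
  qed
qed

lemma setsup_eqI:
  assumes "\<And>Q. Q \<in> Qs \<Longrightarrow> measure Q A \<le> b" and "\<exists>Q\<in>Qs. measure Q A = b"
  shows "setsup Qs A = b"
  unfolding setsup_def using assms by (intro cSup_eq_maximum) auto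

lemma prob_space_Pset: "Q \<in> Pset M Y1 Y2 \<Longrightarrow> prob_space Q"
  and sets_Pset: "Q \<in> Pset M Y1 Y2 \<Longrightarrow> sets Q = sets M"
  by (auto simp: Pset_def)

lemma measure_le_setsup_Pset:
  assumes "Q \<in> Pset M Y1 Y2"
  shows "measure Q A \<le> setsup (Pset M Y1 Y2) A"
  unfolding setsup_def
proof (rule cSUP_upper[OF assms])
  show "bdd_above ((\<lambda>Q. measure Q A) ` Pset M Y1 Y2)"
    by (rule bdd_aboveI[of _ 1]) (auto dest: prob_space_Pset prob_space.prob_le_1)
qed

lemma SUP_LVaR_Pset_eq_LVaR_setsup:
  assumes attained: "\<And>A. A \<in> sets M \<Longrightarrow> \<exists>Q\<in>Pset M Y1 Y2. measure Q A = setsup (Pset M Y1 Y2) A"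
    and X: "X \<in> borel_measurable M" and L: "mono L"
  shows "(SUP Q\<in>Pset M Y1 Y2. LVaR (space M) (measure Q) L X)
    = LVaR (space M) (setsup (Pset M Y1 Y2)) L X"
proof (rule SUP_LVaR_eq_LVaR_envelope[OF _ L])
  have level: "{\<omega>\<in>space M. X \<omega> > x} \<in> sets M" for x using X by measurable
  show "Pset M Y1 Y2 \<noteq> {}" using attained[of "space M"] by auto
  show "\<exists>Q\<in>Pset M Y1 Y2. measure Q {\<omega>\<in>space M. X \<omega> > x} = setsup (Pset M Y1 Y2) {\<omega>\<in>space M. X \<omega> > x}"
    for x using attained[OF level] .
  show "measure Q {\<omega>\<in>space M. X \<omega> > x} \<le> setsup (Pset M Y1 Y2) {\<omega>\<in>space M. X \<omega> > x}"
    if "Q \<in> Pset M Y1 Y2" for Q x using that by (rule measure_le_setsup_Pset)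
  show "measure Q {\<omega>\<in>space M. X \<omega> > y} \<le> measure Q {\<omega>\<in>space M. X \<omega> > x}"
    if Q: "Q \<in> Pset M Y1 Y2" and "x \<le> y" for Q x y
  proof -
    interpret Q: prob_space Q using Q by (rule prob_space_Pset)
    show ?thesis
      using level[of x] sets_Pset[OF Q] \<open>x \<le> y\<close> by (intro Q.finite_measure_mono) auto
  qed
qed

lemma density_in_Pset:
  assumes "sigma_finite_measure M" and f: "f \<in> borel_measurable M" "integrable M f"
    and bounds: "\<And>x. x \<in> space M \<Longrightarrow> 0 \<le> f x \<and> Y1 x \<le> f x \<and> f x \<le> Y2 x"
    and total: "integral\<^sup>L M f = 1"
  shows "density M (\<lambda>x. ennreal (f x)) \<in> Pset M Y1 Y2"
    and "A \<in> sets M \<Longrightarrow> measure (density M (\<lambda>x. ennreal (f x))) A = (LINT x:A|M. f x)"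
proof -
  interpret sigma_finite_measure M by fact
  let ?N = "density M (\<lambda>x. ennreal (f x))"
  have emeasure_N: "emeasure ?N A = ennreal (LINT x:A|M. f x)" if "A \<in> sets M" for A
    using that f bounds by (simp add: emeasure_density nn_set_integral_eq_set_integral)
  have "emeasure ?N (space ?N) = 1"
    using emeasure_N[of "space M"] total f by (simp add: set_integral_space)
  then have "prob_space ?N" by (rule prob_spaceI)
  moreover have "AE x in M. ennreal (f x) = RN_deriv M ?N x"
    using f by (intro RN_deriv_unique) auto
  then have "AE x in M. ennreal (Y1 x) \<le> RN_deriv M ?N x \<and> RN_deriv M ?N x \<le> ennreal (Y2 x)"
    using AE_space by eventually_elim (use bounds in \<open>metis ennreal_leI\<close>)
  ultimately show "?N \<in> Pset M Y1 Y2"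
    unfolding Pset_def using f by (auto intro!: absolutely_continuousI_density)
  assume A: "A \<in> sets M"
  have "0 \<le> (LINT x:A|M. f x)"
    using bounds unfolding set_lebesgue_integral_def
    by (intro Bochner_Integration.integral_nonneg) (auto simp: indicator_def)
  then show "measure ?N A = (LINT x:A|M. f x)"
    using emeasure_N[OF A] by (simp add: measure_def)
qed

lemma two_level_density_in_Pset:
  assumes M: "sigma_finite_measure M" and Y: "Y \<in> borel_measurable M" "integrable M Y" and A: "A \<in> sets M"
    and on_A: "\<And>x. x \<in> space M \<Longrightarrow> x \<in> A \<Longrightarrow> 0 \<le> \<alpha> * Y x \<and> Y1 x \<le> \<alpha> * Y x \<and> \<alpha> * Y x \<le> Y2 x"
    and off_A: "\<And>x. x \<in> space M \<Longrightarrow> x \<notin> A \<Longrightarrow> 0 \<le> \<beta> * Y x \<and> Y1 x \<le> \<beta> * Y x \<and> \<beta> * Y x \<le> Y2 x"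
    and total: "\<alpha> * (LINT x:A|M. Y x) + \<beta> * (integral\<^sup>L M Y - (LINT x:A|M. Y x)) = 1"
  shows "\<exists>Q\<in>Pset M Y1 Y2. measure Q A = \<alpha> * (LINT x:A|M. Y x)"
proof -
  define f where "f x = \<alpha> * (indicator A x * Y x) + \<beta> * (Y x - indicator A x * Y x)" for x
  have YA: "integrable M (\<lambda>x. indicator A x * Y x)"
    using integrable_mult_indicator[OF A Y(2)] by simp
  have f_meas: "f \<in> borel_measurable M" unfolding f_def using Y A by measurable
  have f_int: "integrable M f" unfolding f_def using YA Y by auto
  have YA_eq: "(LINT x:A|M. Y x) = integral\<^sup>L M (\<lambda>x. indicator A x * Y x)"
    by (simp add: set_lebesgue_integral_def)
  have "integral\<^sup>L M f = 1"
    unfolding f_def using YA Y total YA_eq by simp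
  moreover have "0 \<le> f x \<and> Y1 x \<le> f x \<and> f x \<le> Y2 x" if "x \<in> space M" for x
    using on_A[OF that] off_A[OF that] by (cases "x \<in> A") (auto simp: f_def)
  moreover have "(LINT x:A|M. f x) = \<alpha> * (LINT x:A|M. Y x)"
  proof -
    have "(LINT x:A|M. f x) = integral\<^sup>L M (\<lambda>x. \<alpha> * (indicator A x * Y x))"
      unfolding set_lebesgue_integral_def f_def
      by (rule Bochner_Integration.integral_cong) (auto simp: indicator_def)
    then show ?thesis using YA_eq by simp
  qed
  ultimately show ?thesis
    using density_in_Pset[OF M f_meas f_int] A by metis
qed

lemma Pset_emeasure_bounds:
  assumes "sigma_finite_measure M" and Q: "Q \<in> Pset M Y1 Y2" and A: "A \<in> sets M"
  shows "(\<integral>\<^sup>+x\<in>A. ennreal (Y1 x) \<partial>M) \<le> emeasure Q A"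
    and "emeasure Q A \<le> (\<integral>\<^sup>+x\<in>A. ennreal (Y2 x) \<partial>M)"
proof -
  interpret sigma_finite_measure M by fact
  from Q have "absolutely_continuous M Q" and "sets Q = sets M"
    and bounds: "AE x in M. ennreal (Y1 x) \<le> RN_deriv M Q x \<and> RN_deriv M Q x \<le> ennreal (Y2 x)"
    by (auto simp: Pset_def)
  then have Q_eq: "emeasure Q A = (\<integral>\<^sup>+x\<in>A. RN_deriv M Q x \<partial>M)"
    using density_RN_deriv A by (metis emeasure_density borel_measurable_RN_deriv)
  show "(\<integral>\<^sup>+x\<in>A. ennreal (Y1 x) \<partial>M) \<le> emeasure Q A"
    unfolding Q_eq by (rule nn_integral_mono_AE) (use bounds in \<open>eventually_elim, auto simp: indicator_def\<close>)
  show "emeasure Q A \<le> (\<integral>\<^sup>+x\<in>A. ennreal (Y2 x) \<partial>M)"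
    unfolding Q_eq by (rule nn_integral_mono_AE) (use bounds in \<open>eventually_elim, auto simp: indicator_def\<close>)
qed

lemma measure_Pset_zero_le:
  assumes "sigma_finite_measure M" and Q: "Q \<in> Pset M (\<lambda>_. 0) Y"
    and Y: "Y \<in> borel_measurable M" "\<forall>x\<in>space M. 0 \<le> Y x" "integrable M Y"
    and A: "A \<in> sets M"
  shows "measure Q A \<le> min 1 (LINT x:A|M. Y x)"
proof -
  interpret Q: prob_space Q using Q by (rule prob_space_Pset)
  have YA_nonneg: "0 \<le> (LINT x:A|M. Y x)"
    using Y unfolding set_lebesgue_integral_def
    by (intro Bochner_Integration.integral_nonneg) (auto simp: indicator_def)
  have "emeasure Q A \<le> ennreal (LINT x:A|M. Y x)"
    using Pset_emeasure_bounds(2)[OF assms(1) Q A] Y A by (simp add: nn_set_integral_eq_set_integral)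
  then have "measure Q A \<le> (LINT x:A|M. Y x)"
    using YA_nonneg by (simp add: Q.emeasure_eq_measure)
  then show ?thesis using Q.prob_le_1 by simp
qed

text \<open>If \<open>\<integral>\<^sub>A Y \<ge> 1\<close> the whole mass sits on \<open>A\<close>; otherwise \<open>Y\<close> is kept on \<open>A\<close> and scaled down
  by \<open>(1 - \<integral>\<^sub>A Y) / (\<integral> Y - \<integral>\<^sub>A Y)\<close> off \<open>A\<close>.\<close>

lemma Pset_zero_attains_min:
  assumes M: "prob_space M"
    and Y: "Y \<in> borel_measurable M" "\<forall>x\<in>space M. 0 \<le> Y x" "integrable M Y"
      "1 \<le> integral\<^sup>L M Y"
    and A: "A \<in> sets M"
  shows "\<exists>Q\<in>Pset M (\<lambda>_. 0) Y. measure Q A = min 1 (LINT x:A|M. Y x)"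
proof -
  define a where "a = (LINT x:A|M. Y x)"
  define E where "E = integral\<^sup>L M Y"
  have scaled_below: "0 \<le> c * Y x \<and> c * Y x \<le> Y x" if "0 \<le> c" "c \<le> 1" "x \<in> space M" for c x
    using that Y(2) by (simp add: mult_left_le_one_le)
  show ?thesis
  proof (cases "1 \<le> a")
    case True
    have "\<exists>Q\<in>Pset M (\<lambda>_. 0) Y. measure Q A = (1 / a) * a"
      unfolding a_def
      by (rule two_level_density_in_Pset[OF prob_space_imp_sigma_finite[OF M] Y(1,3) A, where \<beta> = 0])
        (use True scaled_below[of "1 / a"] Y(2) in \<open>auto simp: a_def[symmetric]\<close>)
    then show ?thesis using True unfolding a_def by simp
  next
    case False
    have "1 - a \<le> E - a" using Y(4) unfolding E_def by simp
    then have c: "0 \<le> (1 - a) / (E - a)" "(1 - a) / (E - a) \<le> 1" using False by simp_all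
    have "\<exists>Q\<in>Pset M (\<lambda>_. 0) Y. measure Q A = 1 * a"
      unfolding a_def
      by (rule two_level_density_in_Pset[OF prob_space_imp_sigma_finite[OF M] Y(1,3) A, where \<beta> = "(1 - a) / (E - a)"])
        (use False \<open>1 - a \<le> E - a\<close> scaled_below[OF c] Y(2) in
          \<open>auto simp: a_def[symmetric] E_def[symmetric]\<close>)
    then show ?thesis using False unfolding a_def by simp
  qed
qed

lemma setsup_Pset_zero:
  assumes M: "prob_space M"
    and Y: "Y \<in> borel_measurable M" "\<forall>x\<in>space M. 0 \<le> Y x" "integrable M Y"
      "1 \<le> integral\<^sup>L M Y"
    and A: "A \<in> sets M"
  shows "setsup (Pset M (\<lambda>_. 0) Y) A = min 1 (LINT x:A|M. Y x)"
  using measure_Pset_zero_le[OF prob_space_imp_sigma_finite[OF M] _ Y(1-3) A]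
    Pset_zero_attains_min[OF assms]
  by (rule setsup_eqI)

lemma measure_Pset_const_le:
  assumes M: "prob_space M" and Q: "Q \<in> Pset M (\<lambda>_. k1) (\<lambda>_. k2)"
    and k: "0 \<le> k1" "0 \<le> k2" and A: "A \<in> sets M"
  shows "measure Q A \<le> gfun k1 k2 (measure M A)"
proof -
  interpret prob_space M by fact
  interpret Q: prob_space Q using Q by (rule prob_space_Pset)
  have sets_Q: "sets Q = sets M" using Q by (rule sets_Pset)
  define p where "p = measure M A"
  have "emeasure Q A \<le> ennreal k2 * emeasure M A"
    using Pset_emeasure_bounds(2)[OF prob_space_imp_sigma_finite[OF M] Q A] A
    by (simp add: nn_integral_cmult_indicator)
  then have "ennreal (measure Q A) \<le> ennreal (k2 * p)"
    using k by (simp add: Q.emeasure_eq_measure emeasure_eq_measure p_def ennreal_mult)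
  then have "measure Q A \<le> k2 * p"
    using k by (simp add: p_def)
  moreover have "ennreal k1 * emeasure M (space M - A) \<le> emeasure Q (space M - A)"
    using Pset_emeasure_bounds(1)[OF prob_space_imp_sigma_finite[OF M] Q] A
    by (simp add: nn_integral_cmult_indicator)
  then have "ennreal (k1 * (1 - p)) \<le> ennreal (measure Q (space M - A))"
    using k A by (simp add: Q.emeasure_eq_measure emeasure_eq_measure ennreal_mult prob_compl p_def)
  then have "k1 * (1 - p) \<le> measure Q (space M - A)"
    by (simp add: ennreal_le_iff)
  moreover have "measure Q (space M - A) = 1 - measure Q A"
    using Q.prob_compl[of A] A sets_Q sets_eq_imp_space_eq[OF sets_Q] by simp
  ultimately show ?thesis unfolding gfun_def p_def by (simp add: algebra_simps)
qed

text \<open>Density \<open>k\<^sub>2\<close> on \<open>A\<close> and the constant \<open>(1 - k\<^sub>2 \<bbbP>(A)) / (1 - \<bbbP>(A))\<close> off \<open>A\<close> if \<open>k\<^sub>2 \<bbbP>(A) \<le> g(\<bbbP>(A))\<close>;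
  otherwise \<open>k\<^sub>1\<close> off \<open>A\<close> and the constant filling up the total mass on \<open>A\<close>.\<close>

lemma Pset_const_attains_gfun:
  assumes M: "prob_space M" and k: "0 \<le> k1" "k1 < 1" "1 < k2" and A: "A \<in> sets M"
  shows "\<exists>Q\<in>Pset M (\<lambda>_. k1) (\<lambda>_. k2). measure Q A = gfun k1 k2 (measure M A)"
proof -
  interpret prob_space M by fact
  define p where "p = measure M A"
  have p: "0 \<le> p" "p \<le> 1" unfolding p_def by auto
  have const_on_A: "(LINT x:A|M. (1::real)) = p" "integral\<^sup>L M (\<lambda>_. 1::real) = 1"
    unfolding p_def set_lebesgue_integral_def using A by (simp_all add: prob_space)
  show ?thesis
  proof (cases "k2 * p \<le> k1 * p + 1 - k1")
    case True
    with k have "p < 1" by (cases "p = 1") (use p in auto)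
    define c where "c = (1 - k2 * p) / (1 - p)"
    have c: "k1 \<le> c" "c \<le> k2" "k2 * p + c * (1 - p) = 1"
      unfolding c_def using \<open>p < 1\<close> True p k by (simp_all add: field_simps)
    have "\<exists>Q\<in>Pset M (\<lambda>_. k1) (\<lambda>_. k2). measure Q A = k2 * (LINT x:A|M. (1::real))"
      by (rule two_level_density_in_Pset[OF prob_space_imp_sigma_finite[OF M] _ _ A, where \<beta> = c])
        (use k c in \<open>auto simp: const_on_A prob_space\<close>)
    then show ?thesis using True unfolding const_on_A gfun_def p_def by simp
  next
    case False
    with k have "0 < p" by (cases "p = 0") (use p in auto)
    define c where "c = (k1 * p + 1 - k1) / p"
    have c: "k1 \<le> c" "c \<le> k2" "c * p + k1 * (1 - p) = 1"
      unfolding c_def using \<open>0 < p\<close> False k by (simp_all add: field_simps)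
    have "\<exists>Q\<in>Pset M (\<lambda>_. k1) (\<lambda>_. k2). measure Q A = c * (LINT x:A|M. (1::real))"
      by (rule two_level_density_in_Pset[OF prob_space_imp_sigma_finite[OF M] _ _ A, where \<beta> = k1])
        (use k c in \<open>auto simp: const_on_A prob_space\<close>)
    then show ?thesis using False \<open>0 < p\<close> unfolding const_on_A gfun_def p_def c_def by simp
  qed
qed

lemma setsup_Pset_const:
  assumes M: "prob_space M" and k: "0 \<le> k1" "k1 < 1" "1 < k2" and A: "A \<in> sets M"
  shows "setsup (Pset M (\<lambda>_. k1) (\<lambda>_. k2)) A = gfun k1 k2 (measure M A)"
  using measure_Pset_const_le[OF M _ k(1) _ A] k(3) Pset_const_attains_gfun[OF assms]
  by (intro setsup_eqI) auto

lemma gfun_mono: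
  assumes "0 \<le> k1" "0 \<le> k2" "u \<le> v"
  shows "gfun k1 k2 u \<le> gfun k1 k2 v"
  unfolding gfun_def using assms by (intro min.mono) (auto intro: mult_left_mono)

lemma gfun_strict_mono:
  assumes "0 \<le> k1" "0 < k2" "u < v" "gfun k1 k2 v < 1"
  shows "gfun k1 k2 u < gfun k1 k2 v"
proof (cases "k2 * v \<le> k1 * v + 1 - k1")
  case True
  then have "gfun k1 k2 v = k2 * v" by (simp add: gfun_def)
  moreover have "gfun k1 k2 u \<le> k2 * u" by (simp add: gfun_def)
  moreover have "k2 * u < k2 * v" using assms by simp
  ultimately show ?thesis by linarith
next
  case False
  then have gv: "gfun k1 k2 v = k1 * v + 1 - k1" by (simp add: gfun_def)
  with assms have "0 < k1" by (cases "k1 = 0") auto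
  moreover have "gfun k1 k2 u \<le> k1 * u + 1 - k1" by (simp add: gfun_def)
  ultimately show ?thesis using gv assms by (smt (verit) mult_strict_left_mono)
qed

lemma gfun_ginv:
  assumes k: "0 \<le> k1" "k1 < 1" "1 < k2" and y: "0 < y" "y < 1"
  shows "0 \<le> ginv k1 k2 y \<and> ginv k1 k2 y \<le> 1 \<and> gfun k1 k2 (ginv k1 k2 y) = y"
proof -
  have "\<exists>x\<ge>0. x \<le> 1 \<and> gfun k1 k2 x = y"
  proof (rule IVT')
    show "gfun k1 k2 0 \<le> y" "y \<le> gfun k1 k2 1" using k y by (simp_all add: gfun_def)
    show "continuous_on {0..1} (gfun k1 k2)" unfolding gfun_def by (intro continuous_intros)
  qed simp
  then obtain x where x: "0 \<le> x" "x \<le> 1" "gfun k1 k2 x = y" by blast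
  have "ginv k1 k2 y = x"
    unfolding ginv_def
  proof (rule the_equality)
    show "0 \<le> x \<and> x \<le> 1 \<and> gfun k1 k2 x < 1 \<and> gfun k1 k2 x = y" using x y by simp
    fix x' assume x': "0 \<le> x' \<and> x' \<le> 1 \<and> gfun k1 k2 x' < 1 \<and> gfun k1 k2 x' = y"
    show "x' = x"
    proof (rule linorder_cases[of x' x])
      assume "x' < x"
      then show ?thesis using gfun_strict_mono[of k1 k2 x' x] x x' y k by simp
    next
      assume "x < x'"
      then show ?thesis using gfun_strict_mono[of k1 k2 x x'] x x' y k by simp
    qed
  qed
  then show ?thesis using x by simp
qed

lemma gfun_le_iff_le_ginv:
  assumes k: "0 \<le> k1" "k1 < 1" "1 < k2" and y: "0 < y" "y < 1" and p: "0 \<le> p" "p \<le> 1"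
  shows "gfun k1 k2 p \<le> y \<longleftrightarrow> p \<le> ginv k1 k2 y"
proof
  assume gp: "gfun k1 k2 p \<le> y"
  show "p \<le> ginv k1 k2 y"
  proof (rule ccontr)
    assume "\<not> p \<le> ginv k1 k2 y"
    then have "gfun k1 k2 (ginv k1 k2 y) < gfun k1 k2 p"
      using gp y k by (intro gfun_strict_mono) auto
    then show False using gp gfun_ginv[OF k y] by simp
  qed
next
  assume "p \<le> ginv k1 k2 y"
  then show "gfun k1 k2 p \<le> y" using gfun_mono[of k1 k2 p] gfun_ginv[OF k y] k by force
qed

lemma LVaR_gfun_eq_LVaR_ginv:
  assumes "prob_space M" and k: "0 \<le> k1" "k1 < 1" "1 < k2" and L: "\<And>x. 0 < L x \<and> L x < 1"
  shows "LVaR \<Omega> (\<lambda>A. gfun k1 k2 (measure M A)) L X = LVaR \<Omega> (measure M) (ginv k1 k2 \<circ> L) X"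
proof (rule LVaR_cong)
  interpret prob_space M by fact
  show "gfun k1 k2 (measure M {\<omega>\<in>\<Omega>. X \<omega> > x}) \<le> L x
    \<longleftrightarrow> measure M {\<omega>\<in>\<Omega>. X \<omega> > x} \<le> (ginv k1 k2 \<circ> L) x" for x
    using L[of x] by (simp add: gfun_le_iff_le_ginv[OF k])
qed

theorem mainTheorem9:
  fixes M :: "'a measure" and L :: "real \<Rightarrow> real"
  assumes "prob_space M" and "atomless M" and "L \<in> H_I"
  shows
   "(\<forall>Y2. Y2 \<in> borel_measurable M \<and> (\<forall>x\<in>space M. 0 \<le> Y2 x) \<and> integrable M Y2
        \<and> 1 < integral\<^sup>L M Y2 \<longrightarrow>
      (\<forall>A\<in>sets M. setsup (Pset M (\<lambda>_. 0) Y2) A = min 1 (LINT x:A|M. Y2 x)) \<and>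
      (\<forall>X\<in>borel_measurable M.
         (SUP Q\<in>Pset M (\<lambda>_. 0) Y2. LVaR (space M) (measure Q) L X)
           = LVaR (space M) (setsup (Pset M (\<lambda>_. 0) Y2)) L X))
    \<and>
    (\<forall>k1 k2::real. 0 \<le> k1 \<and> k1 < 1 \<and> 1 < k2 \<longrightarrow>
      (\<forall>A\<in>sets M. setsup (Pset M (\<lambda>_. k1) (\<lambda>_. k2)) A = gfun k1 k2 (measure M A)) \<and>
      (\<forall>X\<in>borel_measurable M.
         (SUP Q\<in>Pset M (\<lambda>_. k1) (\<lambda>_. k2). LVaR (space M) (measure Q) L X)
           = LVaR (space M) (measure M) (ginv k1 k2 \<circ> L) X))"
proof (intro conjI allI impI ballI)
  have L: "mono L" "\<And>x. 0 < L x \<and> L x < 1" using assms(3) by (auto simp: H_I_def)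
  fix Y :: "'a \<Rightarrow> real" assume "Y \<in> borel_measurable M \<and> (\<forall>x\<in>space M. 0 \<le> Y x) \<and> integrable M Y \<and> 1 < integral\<^sup>L M Y"
  then have Y: "Y \<in> borel_measurable M" "\<forall>x\<in>space M. 0 \<le> Y x" "integrable M Y"
    "1 \<le> integral\<^sup>L M Y" by (auto simp: less_imp_le)
  note setsup_eq = setsup_Pset_zero[OF assms(1) Y]
  show "setsup (Pset M (\<lambda>_. 0) Y) A = min 1 (LINT x:A|M. Y x)" if "A \<in> sets M" for A
    using setsup_eq[OF that] .
  show "(SUP Q\<in>Pset M (\<lambda>_. 0) Y. LVaR (space M) (measure Q) L X)
      = LVaR (space M) (setsup (Pset M (\<lambda>_. 0) Y)) L X" if "X \<in> borel_measurable M" for X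
    using Pset_zero_attains_min[OF assms(1) Y] setsup_eq
    by (intro SUP_LVaR_Pset_eq_LVaR_setsup[OF _ that L(1)]) simp
next
  have L: "mono L" "\<And>x. 0 < L x \<and> L x < 1" using assms(3) by (auto simp: H_I_def)
  fix k1 k2 :: real assume "0 \<le> k1 \<and> k1 < 1 \<and> 1 < k2"
  then have k: "0 \<le> k1" "k1 < 1" "1 < k2" by auto
  note setsup_eq = setsup_Pset_const[OF assms(1) k]
  show "setsup (Pset M (\<lambda>_. k1) (\<lambda>_. k2)) A = gfun k1 k2 (measure M A)" if "A \<in> sets M" for A
    using setsup_eq[OF that] .
  fix X :: "'a \<Rightarrow> real" assume X: "X \<in> borel_measurable M"
  have level: "{\<omega>\<in>space M. X \<omega> > x} \<in> sets M" for x using X by measurable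
  have "(SUP Q\<in>Pset M (\<lambda>_. k1) (\<lambda>_. k2). LVaR (space M) (measure Q) L X)
      = LVaR (space M) (setsup (Pset M (\<lambda>_. k1) (\<lambda>_. k2))) L X"
    using Pset_const_attains_gfun[OF assms(1) k] setsup_eq
    by (intro SUP_LVaR_Pset_eq_LVaR_setsup[OF _ X L(1)]) simp
  also have "\<dots> = LVaR (space M) (\<lambda>A. gfun k1 k2 (measure M A)) L X"
    using setsup_eq[OF level] by (intro LVaR_cong) simp
  also have "\<dots> = LVaR (space M) (measure M) (ginv k1 k2 \<circ> L) X"
    by (rule LVaR_gfun_eq_LVaR_ginv[OF assms(1) k L(2)])
  finally show "(SUP Q\<in>Pset M (\<lambda>_. k1) (\<lambda>_. k2). LVaR (space M) (measure Q) L X)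
      = LVaR (space M) (measure M) (ginv k1 k2 \<circ> L) X" .
qed

end
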